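(* Let $\mathcal X,\mathcal Y,\mathcal G,\mathcal H$ be Banach spaces with continuous embeddings $\mathcal X\subset\mathcal G$ and $\mathcal Y\subset\mathcal H\subset\mathcal G^*\subset\mathcal X^*$. Let $\mathcal U\subset\mathcal X$ be open, $\mathcal E:\mathcal U\to\mathbb R$ a $C^2$ function, and $x_\infty\in\mathcal U$ a critical point, $\mathcal E'(x_\infty)=0$. Let $\mathcal M:\mathcal U\to\mathcal Y$ be a $C^1$ gradient map for $\mathcal E$, and suppose $\mathcal E$ is Morse–Bott at $x_\infty$, so that $\mathcal U\cap\mathrm{Crit}\,\mathcal E$ is a relatively open smooth submanifold of $\mathcal X$ and $K:=\mathrm{Ker}\,\mathcal E''(x_\infty)=T_{x_\infty}\mathrm{Crit}\,\mathcal E$. Suppose that for each $x\in\mathcal U$ the bounded linear operator $\mathcal M'(x):\mathcal X\to\mathcal Y$ has an extension $\mathcal M_1(x):\mathcal G\to\mathcal H$ such that the map $\mathcal U\ni x\mapsto\mathcal M_1(x)\in\mathcal L(\mathcal G,\mathcal H)$ is continuous. Assume that $K$ has a closed complement $\mathcal X_0\subset\mathcal X$, that $\mathcal K:=\mathrm{Ker}\,\mathcal M_1(x_\infty)\subset\mathcal G$ has a closed complement $\mathcal G_0\subset\mathcal G$ with $\mathcal X_0\subset\mathcal G_0$, and that $\mathrm{Ran}\,\mathcal M_1(x_\infty)\subset\mathcal H$ is closed. Then there are constants $Z\in(0,\infty)$ and $\sigma\in(0,1]$ such that every $x\in\mathcal U$ with $\|x-x_\infty\|_{\mathcal X}<\sigma$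 satisfies $$\|\mathcal M(x)\|_{\mathcal H}\geq Z\,|\mathcal E(x)-\mathcal E(x_\infty)|^{1/2}.$$
   Context: Gradient map: if $\mathcal U\subset\mathcal X$ is open and $\mathcal Y\subset\mathcal X^*$ is a Banach space continuously embedded, a continuous map $\mathcal M:\mathcal U\to\mathcal Y$ is a gradient map for a $C^1$ function $\mathcal E:\mathcal U\to\mathbb R$ if $\mathcal E'(x)v=\langle v,\mathcal M(x)\rangle_{\mathcal X\times\mathcal X^*}$ for all $x\in\mathcal U$, $v\in\mathcal X$. $\mathrm{Crit}\,\mathcal E=\{x:\mathcal E'(x)=0\}$, and $\mathcal E''(x):\mathcal X\to\mathcal X^*$ is the Hessian. A $C^2$ function $\mathcal E$ is Morse–Bott at $x_0$ if there is an open neighborhood $\mathcal U$ of $x_0$ such that $\mathcal U\cap\mathrm{Crit}\,\mathcal E$ is a relatively open smooth submanifold and $T_{x_0}\mathrm{Crit}\,\mathcal E=\mathrm{Ker}\,\mathcal E''(x_0)$. $\mathcal L(\mathcal G,\mathcal H)$ is the Banach space of bounded linear operators. *)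

theory Defs
  imports "HOL-Analysis.Analysis"
begin

text \<open>Bounded multilinear maps X^k \<rightarrow> Y, represented on lists of length k.\<close>
definition bounded_multilinear_list ::
  "nat \<Rightarrow> ('a::real_normed_vector list \<Rightarrow> 'b::real_normed_vector) \<Rightarrow> bool" where
  "bounded_multilinear_list k L \<longleftrightarrow>
     (\<forall>as bs x y. length as + length bs + 1 = k \<longrightarrow>
        L (as @ (x + y) # bs) = L (as @ x # bs) + L (as @ y # bs)) \<and>
     (\<forall>as bs x (c::real). length as + length bs + 1 = k \<longrightarrow>
        L (as @ (c *\<^sub>R x) # bs) = c *\<^sub>R L (as @ x # bs)) \<and>
     (\<exists>C. \<forall>vs. length vs = k \<longrightarrow> norm (L vs) \<le> C * prod_list (map norm vs))"

text \<open>C^k maps on an (open) set of a normed space, in the Frechet sense: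
  D j x is the j-th derivative at x (a bounded j-linear map), each D j is continuous
  in operator norm, and D (j+1) is the Frechet derivative of D j in operator norm.\<close>
definition Ck_on :: "nat \<Rightarrow> 'a::real_normed_vector set \<Rightarrow> ('a \<Rightarrow> 'b::real_normed_vector) \<Rightarrow> bool" where
  "Ck_on k U f \<longleftrightarrow> (\<exists>D :: nat \<Rightarrow> 'a \<Rightarrow> 'a list \<Rightarrow> 'b.
     (\<forall>x\<in>U. D 0 x [] = f x) \<and>
     (\<forall>j\<le>k. \<forall>x\<in>U. bounded_multilinear_list j (D j x)) \<and>
     (\<forall>j\<le>k. \<forall>x\<in>U. \<forall>e>0. \<exists>d>0. \<forall>y\<in>U. norm (y - x) < d \<longrightarrow>
        (\<forall>vs. length vs = j \<longrightarrow> norm (D j y vs - D j x vs) \<le> e * prod_list (map norm vs))) \<and>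
     (\<forall>j<k. \<forall>x\<in>U. \<forall>e>0. \<exists>d>0. \<forall>y\<in>U. norm (y - x) < d \<longrightarrow>
        (\<forall>vs. length vs = j \<longrightarrow>
           norm (D j y vs - D j x vs - D (Suc j) x ((y - x) # vs))
             \<le> e * norm (y - x) * prod_list (map norm vs))))"

definition smooth_on :: "'a::real_normed_vector set \<Rightarrow> ('a \<Rightarrow> 'b::real_normed_vector) \<Rightarrow> bool" where
  "smooth_on U f \<longleftrightarrow> (\<forall>k. Ck_on k U f)"

definition closed_complement :: "'a::real_normed_vector set \<Rightarrow> 'a set \<Rightarrow> bool" where
  "closed_complement A B \<longleftrightarrow> subspace B \<and> closed B \<and> A \<inter> B = {0} \<and>
     (\<forall>x. \<exists>a\<in>A. \<exists>b\<in>B. x = a + b)"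

definition smooth_submanifold :: "'a::banach set \<Rightarrow> bool" where
  "smooth_submanifold S \<longleftrightarrow> (\<forall>p\<in>S. \<exists>V W (\<phi>::'a \<Rightarrow> 'a) (\<psi>::'a \<Rightarrow> 'a) (F::'a set).
     open V \<and> p \<in> V \<and> open W \<and> \<phi> ` V = W \<and>
     (\<forall>x\<in>V. \<psi> (\<phi> x) = x) \<and> (\<forall>y\<in>W. \<phi> (\<psi> y) = y) \<and>
     smooth_on V \<phi> \<and> smooth_on W \<psi> \<and>
     subspace F \<and> closed F \<and> (\<exists>F'. closed_complement F F') \<and>
     \<phi> ` (V \<inter> S) = W \<inter> F)"

definition tangent_space :: "'a::real_normed_vector set \<Rightarrow> 'a \<Rightarrow> 'a set" where
  "tangent_space S p = {v. \<exists>(\<gamma>::real \<Rightarrow> 'a) e. e > 0 \<and> \<gamma> ` {-e<..<e} \<subseteq> S \<and> \<gamma> 0 = p \<and>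
      (\<gamma> has_vector_derivative v) (at 0)}"

definition crit :: "'x::real_normed_vector set \<Rightarrow> ('x \<Rightarrow> ('x \<Rightarrow>\<^sub>L real)) \<Rightarrow> 'x set" where
  "crit U E1 = {x\<in>U. E1 x = 0}"

definition morse_bott_at ::
  "'x::banach set \<Rightarrow> ('x \<Rightarrow> ('x \<Rightarrow>\<^sub>L real)) \<Rightarrow> ('x \<Rightarrow> ('x \<Rightarrow>\<^sub>L ('x \<Rightarrow>\<^sub>L real))) \<Rightarrow> 'x \<Rightarrow> bool" where
  "morse_bott_at U E1 E2 x0 \<longleftrightarrow> (\<exists>V. open V \<and> x0 \<in> V \<and> V \<subseteq> U \<and>
     smooth_submanifold (V \<inter> crit U E1) \<and>
     tangent_space (V \<inter> crit U E1) x0 = {v. blinfun_apply (E2 x0) v = 0})"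

end

theory Submission
  imports Defs
begin

text \<open>A
  contraction argument in a flattening chart writes every x close to x_inf as x = xc + h with xc
  critical, E xc = E x_inf and h in the complement X0. On the segment from xc to x, M is close to its
  linearization M1 x_inf, which by the open mapping argument (Baire) is bounded below on G0, a space
  containing h; hence the norm of M x is at least a multiple of the norm of h, while the energy gap
  E x - E xc is at most a multiple of the square of that norm.\<close>

section \<open>Operators with closed range\<close>

lemma closed_range_ball_in_closure_image:
  fixes T :: "'a::real_normed_vector \<Rightarrow> 'b::banach"
  assumes S: "subspace S" and T: "linear T" and R: "closed (T ` S)"
  obtains \<epsilon> y and n :: nat where "\<epsilon> > 0" "y \<in> T ` S"
    "\<And>w. w \<in> T ` S \<Longrightarrow> dist w y < \<epsilon> \<Longrightarrow> w \<in> closure (T ` (S \<inter> cball 0 (real n)))"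
proof -
  define R where "R = T ` S"
  have "subspace R" unfolding R_def using S T linear_subspace_image by blast
  then have "0 \<in> R" by (rule subspace_0)
  define G where "G = range (\<lambda>n::nat. R \<inter> closure (T ` (S \<inter> cball 0 (real n))))"
  have cm: "completely_metrizable_space (top_of_set R)"
    using completely_metrizable_space_closedin[OF completely_metrizable_space_euclidean] R
    unfolding R_def closed_closedin by blast
  have "R \<subseteq> \<Union>G"
  proof
    fix z assume "z \<in> R"
    then obtain s where s: "s \<in> S" "z = T s" unfolding R_def by auto
    obtain n :: nat where "norm s \<le> real n" using real_arch_simple by blast
    then have "z \<in> T ` (S \<inter> cball 0 (real n))" using s by (intro image_eqI[of z T s]) auto
    then have "z \<in> closure (T ` (S \<inter> cball 0 (real n)))" by (rule closure_subset[THEN subsetD])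
    then show "z \<in> \<Union>G" unfolding G_def using \<open>z \<in> R\<close> by blast
  qed
  then have un: "\<Union>G = R" unfolding G_def by blast
  have "\<exists>C\<in>G. (top_of_set R) interior_of C \<noteq> {}"
  proof (rule ccontr)
    assume "\<not> ?thesis"
    then have "\<And>C. C \<in> G \<Longrightarrow> closedin (top_of_set R) C \<and> (top_of_set R) interior_of C = {}"
      unfolding G_def by (auto simp: closedin_closed_Int)
    moreover have "countable G" unfolding G_def by simp
    ultimately have "(top_of_set R) interior_of \<Union>G = {}"
      using Baire_category_alt[of "top_of_set R" G] cm by blast
    then show False using un \<open>0 \<in> R\<close> by (simp add: interior_of_openin)
  qed
  then obtain n :: nat and y
    where "y \<in> (top_of_set R) interior_of (R \<inter> closure (T ` (S \<inter> cball 0 (real n))))"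
    unfolding G_def by auto
  then obtain Op where Op: "openin (top_of_set R) Op" "y \<in> Op"
      "Op \<subseteq> R \<inter> closure (T ` (S \<inter> cball 0 (real n)))"
    unfolding interior_of_def by blast
  then obtain \<epsilon> where \<epsilon>: "\<epsilon> > 0" and ball: "\<And>w. w \<in> R \<Longrightarrow> dist w y < \<epsilon> \<Longrightarrow> w \<in> Op"
    by (metis openin_euclidean_subtopology_iff)
  show ?thesis
  proof (rule that[of \<epsilon> y n])
    show "\<epsilon> > 0" by (rule \<epsilon>)
    show "y \<in> T ` S" using Op unfolding R_def by blast
    fix w assume "w \<in> T ` S" "dist w y < \<epsilon>"
    then show "w \<in> closure (T ` (S \<inter> cball 0 (real n)))" using ball Op unfolding R_def by blast
  qed
qed

lemma closed_range_approx_preimage: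
  fixes T :: "'a::real_normed_vector \<Rightarrow> 'b::banach"
  assumes S: "subspace S" and T: "bounded_linear T" and R: "closed (T ` S)"
  obtains \<delta> where "\<delta> > 0"
    "\<forall>z\<in>T ` S. \<forall>\<eta>>0. \<exists>s\<in>S. norm s \<le> norm z / \<delta> \<and> norm (z - T s) < \<eta>"
proof -
  obtain \<epsilon> y and n :: nat where \<epsilon>: "\<epsilon> > 0" and yR: "y \<in> T ` S"
    and cl: "\<And>w. w \<in> T ` S \<Longrightarrow> dist w y < \<epsilon> \<Longrightarrow> w \<in> closure (T ` (S \<inter> cball 0 (real n)))"
    using closed_range_ball_in_closure_image[OF S bounded_linear.linear[OF T] R] by metis
  interpret T: bounded_linear T by fact
  have Rsub: "subspace (T ` S)" using S T.linear_axioms linear_subspace_image by blast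
  define \<delta> where "\<delta> = \<epsilon> / (4 * real n + 4)"
  have \<delta>: "\<delta> > 0" unfolding \<delta>_def using \<epsilon> by auto
  have "\<exists>s\<in>S. norm s \<le> norm z / \<delta> \<and> norm (z - T s) < \<eta>" if zR: "z \<in> T ` S" and \<eta>: "\<eta> > 0" for z \<eta>
  proof (cases "z = 0")
    case True
    then show ?thesis using \<eta> S subspace_0 by (auto intro!: bexI[of _ 0])
  next
    case False
    \<comment> \<open>Both y and y + t z lie in the ball, so z is a difference quotient of two small images.\<close>
    define t where "t = \<epsilon> / (2 * norm z)"
    have t: "t > 0" unfolding t_def using False \<epsilon> by auto
    have tz: "norm (t *\<^sub>R z) = \<epsilon>/2" unfolding t_def using False \<epsilon> by auto
    have "y + t *\<^sub>R z \<in> T ` S" using zR yR Rsub by (simp add: subspace_add subspace_scale)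
    then have "y + t *\<^sub>R z \<in> closure (T ` (S \<inter> cball 0 (real n)))"
      using cl tz \<epsilon> by (simp add: dist_norm)
    then obtain w1 where w1: "w1 \<in> T ` (S \<inter> cball 0 (real n))" "dist w1 (y + t *\<^sub>R z) < \<eta> * t / 2"
      using \<eta> t unfolding closure_approachable by (metis half_gt_zero mult_pos_pos)
    have "y \<in> closure (T ` (S \<inter> cball 0 (real n)))" using cl[OF yR] \<epsilon> by simp
    then obtain w2 where w2: "w2 \<in> T ` (S \<inter> cball 0 (real n))" "dist w2 y < \<eta> * t / 2"
      using \<eta> t unfolding closure_approachable by (metis half_gt_zero mult_pos_pos)
    obtain s1 where s1: "s1 \<in> S" "norm s1 \<le> n" "w1 = T s1" using w1 by auto
    obtain s2 where s2: "s2 \<in> S" "norm s2 \<le> n" "w2 = T s2" using w2 by auto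
    define s where "s = (1/t) *\<^sub>R (s1 - s2)"
    have sS: "s \<in> S" unfolding s_def using s1 s2 S by (simp add: subspace_diff subspace_scale)
    have "norm s = norm (s1 - s2) / t" unfolding s_def using t by simp
    also have "\<dots> \<le> (2 * real n) / t"
      using norm_triangle_ineq4[of s1 s2] s1 s2 t by (simp add: divide_right_mono)
    also have "\<dots> = norm z * (4 * real n) / \<epsilon>" unfolding t_def using False \<epsilon> by (simp add: field_simps)
    also have "\<dots> \<le> norm z / \<delta>" unfolding \<delta>_def using \<epsilon> by (simp add: field_simps)
    finally have ns: "norm s \<le> norm z / \<delta>" .
    have "z - T s = (1/t) *\<^sub>R ((y + t *\<^sub>R z - w1) - (y - w2))"
      unfolding s_def using t s1 s2 by (simp add: T.scaleR T.diff algebra_simps)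
    then have "norm (z - T s) = norm ((y + t *\<^sub>R z - w1) - (y - w2)) / t" using t by simp
    also have "\<dots> \<le> (norm (y + t *\<^sub>R z - w1) + norm (y - w2)) / t"
      using t by (intro divide_right_mono norm_triangle_ineq4) auto
    also have "\<dots> < (\<eta> * t / 2 + \<eta> * t / 2) / t"
      using w1 w2 t by (intro divide_strict_right_mono) (auto simp: dist_norm norm_minus_commute)
    also have "\<dots> = \<eta>" using t by simp
    finally show ?thesis using sS ns by blast
  qed
  with \<delta> show ?thesis by (intro that) auto
qed

lemma approx_preimage_series:
  fixes T :: "'a::real_normed_vector \<Rightarrow> 'b::real_normed_vector"
  assumes S: "subspace S" and T: "linear T" and \<delta>: "\<delta> > 0"
    and apx: "\<forall>z\<in>T ` S. \<forall>\<eta>>0. \<exists>s\<in>S. norm s \<le> norm z / \<delta> \<and> norm (z - T s) < \<eta>"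
    and z: "z \<in> T ` S"
  obtains ss where "\<And>k. ss k \<in> S" "\<And>k. norm (ss k) \<le> (norm z / \<delta>) * (1/2) ^ k"
    "\<And>n. norm (z - T (\<Sum>i<n. ss i)) \<le> norm z / 2 ^ n"
proof (cases "z = 0")
  case True
  then show ?thesis using S T by (intro that[of "\<lambda>_. 0"]) (auto simp: subspace_0 linear_0)
next
  case False
  have Rsub: "subspace (T ` S)" using S T linear_subspace_image by blast
  define g where "g w \<eta> = (SOME s. s \<in> S \<and> norm s \<le> norm w / \<delta> \<and> norm (w - T s) < \<eta>)" for w \<eta>
  have g: "g w \<eta> \<in> S \<and> norm (g w \<eta>) \<le> norm w / \<delta> \<and> norm (w - T (g w \<eta>)) < \<eta>"
    if "w \<in> T ` S" "\<eta> > 0" for w \<eta>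
  proof -
    from apx that obtain s where "s \<in> S \<and> norm s \<le> norm w / \<delta> \<and> norm (w - T s) < \<eta>" by blast
    then show ?thesis unfolding g_def by (rule someI)
  qed
  \<comment> \<open>zs k is the residual after k corrections; each correction halves the admissible error.\<close>
  define zs where "zs = rec_nat z (\<lambda>k w. w - T (g w (norm z / 2 ^ Suc k)))"
  define ss where "ss k = g (zs k) (norm z / 2 ^ Suc k)" for k
  have zs0: "zs 0 = z" and zsS: "zs (Suc k) = zs k - T (ss k)" for k
    unfolding zs_def ss_def by simp_all
  have nz: "norm z > 0" using False by simp
  have inv: "zs k \<in> T ` S \<and> norm (zs k) \<le> norm z / 2 ^ k" for k
  proof (induction k)
    case 0 then show ?case using zs0 z by simp
  next
    case (Suc k)
    have gk: "ss k \<in> S" "norm (zs k - T (ss k)) < norm z / 2 ^ Suc k"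
      unfolding ss_def using g[of "zs k" "norm z / 2 ^ Suc k"] Suc nz by simp_all
    then show ?case unfolding zsS using Suc.IH Rsub by (auto intro: subspace_diff)
  qed
  show ?thesis
  proof
    fix k
    have gk: "ss k \<in> S \<and> norm (ss k) \<le> norm (zs k) / \<delta>"
      unfolding ss_def using g[of "zs k" "norm z / 2 ^ Suc k"] inv[of k] nz by simp
    then show "ss k \<in> S" by simp
    have "norm (ss k) \<le> (norm z / 2 ^ k) / \<delta>"
      using gk inv[of k] \<delta> by (meson divide_right_mono less_imp_le order_trans)
    then show "norm (ss k) \<le> (norm z / \<delta>) * (1/2) ^ k" by (simp add: power_one_over mult.commute)
  next
    fix n
    have "T (\<Sum>i<n. ss i) = z - zs n"
      by (induction n) (simp_all add: zs0 zsS linear_0[OF T] linear_add[OF T])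
    then show "norm (z - T (\<Sum>i<n. ss i)) \<le> norm z / 2 ^ n" using inv[of n] by simp
  qed
qed

lemma closed_range_exact_preimage:
  fixes T :: "'a::banach \<Rightarrow> 'b::real_normed_vector"
  assumes S: "subspace S" "closed S" and T: "bounded_linear T" and \<delta>: "\<delta> > 0"
    and apx: "\<forall>z\<in>T ` S. \<forall>\<eta>>0. \<exists>s\<in>S. norm s \<le> norm z / \<delta> \<and> norm (z - T s) < \<eta>"
    and z: "z \<in> T ` S"
  shows "\<exists>s\<in>S. norm s \<le> 2 * norm z / \<delta> \<and> T s = z"
proof -
  interpret T: bounded_linear T by fact
  obtain ss where ssS: "\<And>k. ss k \<in> S" and ssn: "\<And>k. norm (ss k) \<le> (norm z / \<delta>) * (1/2) ^ k"
    and res: "\<And>n. norm (z - T (\<Sum>i<n. ss i)) \<le> norm z / 2 ^ n"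
    using approx_preimage_series[OF S(1) T.linear_axioms \<delta> apx z] by metis
  have geo: "summable (\<lambda>k. (norm z / \<delta>) * (1/2::real) ^ k)"
    by (intro summable_mult summable_geometric) simp
  have sn: "summable (\<lambda>k. norm (ss k))"
    by (rule summable_comparison_test[OF _ geo]) (use ssn in auto)
  define s where "s = suminf ss"
  have lim: "(\<lambda>n. \<Sum>i<n. ss i) \<longlonglongrightarrow> s"
    unfolding s_def by (rule summable_LIMSEQ[OF summable_norm_cancel[OF sn]])
  have "s \<in> S"
    by (rule closed_sequentially[OF S(2) _ lim]) (use S(1) ssS in \<open>simp add: subspace_sum\<close>)
  moreover have "norm s \<le> 2 * norm z / \<delta>"
  proof -
    have "norm s \<le> (\<Sum>k. norm (ss k))" unfolding s_def using sn by (rule summable_norm)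
    also have "\<dots> \<le> (\<Sum>k. (norm z / \<delta>) * (1/2::real) ^ k)"
      using sn geo ssn by (intro suminf_le) auto
    also have "\<dots> = (norm z / \<delta>) * (\<Sum>k. (1/2::real) ^ k)"
      by (rule suminf_mult) (rule summable_geometric, simp)
    also have "\<dots> = 2 * norm z / \<delta>" by (subst suminf_geometric) auto
    finally show ?thesis .
  qed
  moreover have "T s = z"
  proof -
    have "(\<lambda>n. z - T (\<Sum>i<n. ss i)) \<longlonglongrightarrow> z - T s"
      by (rule tendsto_diff[OF tendsto_const T.tendsto[OF lim]])
    moreover have "(\<lambda>n. norm z / 2 ^ n) \<longlonglongrightarrow> 0" by (rule LIMSEQ_divide_realpow_zero) simp
    then have "(\<lambda>n. z - T (\<Sum>i<n. ss i)) \<longlonglongrightarrow> 0"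
      by (rule Lim_null_comparison[rotated]) (use res in simp)
    ultimately show ?thesis using LIMSEQ_unique by fastforce
  qed
  ultimately show ?thesis by blast
qed

lemma bounded_below_if_closed_range:
  fixes T :: "'a::banach \<Rightarrow> 'b::banach"
  assumes S: "subspace S" "closed S" and T: "bounded_linear T" and R: "closed (T ` S)"
    and inj: "\<And>s. s \<in> S \<Longrightarrow> T s = 0 \<Longrightarrow> s = 0"
  obtains c where "c > 0" "\<And>s. s \<in> S \<Longrightarrow> c * norm s \<le> norm (T s)"
proof -
  interpret T: bounded_linear T by fact
  obtain \<delta> where \<delta>: "\<delta> > 0"
    and apx: "\<forall>z\<in>T ` S. \<forall>\<eta>>0. \<exists>s\<in>S. norm s \<le> norm z / \<delta> \<and> norm (z - T s) < \<eta>"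
    using closed_range_approx_preimage[OF S(1) T R] by metis
  have "\<delta> / 2 * norm x \<le> norm (T x)" if x: "x \<in> S" for x
  proof -
    obtain s where s: "s \<in> S" "norm s \<le> 2 * norm (T x) / \<delta>" "T s = T x"
      using closed_range_exact_preimage[OF S T \<delta> apx] x by blast
    have "s = x" using inj[of "s - x"] subspace_diff[OF S(1) s(1) x] s(3) by (simp add: T.diff)
    then show ?thesis using s \<delta> by (simp add: field_simps)
  qed
  with \<delta> show ?thesis by (intro that[of "\<delta>/2"]) auto
qed

section \<open>Closed complements\<close>

lemma closed_complement_decomposition_unique:
  assumes "subspace A" "subspace B" "A \<inter> B = {0}"
    and "a1 \<in> A" "a2 \<in> A" "y - a1 \<in> B" "y - a2 \<in> B"
  shows "a1 = a2"
proof -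
  have "a1 - a2 \<in> A" using assms subspace_diff by blast
  moreover have "(y - a2) - (y - a1) \<in> B" using assms subspace_diff by blast
  ultimately have "a1 - a2 \<in> A \<inter> B" by simp
  then show ?thesis using assms(3) by simp
qed

lemma closed_complement_bounded_below:
  fixes K X0 :: "'a::banach set"
  assumes K: "subspace K" "closed K" and C: "closed_complement K X0"
  obtains c where "c > 0" "\<And>a b. a \<in> K \<Longrightarrow> b \<in> X0 \<Longrightarrow> c * norm a \<le> norm (a + b)"
proof -
  have X0: "subspace X0" "closed X0" "K \<inter> X0 = {0}" "\<And>x. \<exists>a\<in>K. \<exists>b\<in>X0. x = a + b"
    using C unfolding closed_complement_def by auto
  define T where "T p = fst p + snd p" for p :: "'a \<times> 'a"
  have T: "bounded_linear T" unfolding T_def by (intro bounded_linear_add bounded_linear_fst bounded_linear_snd)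
  have "T ` (K \<times> X0) = UNIV"
  proof -
    have "y \<in> T ` (K \<times> X0)" for y
    proof -
      obtain a b where "a \<in> K" "b \<in> X0" "y = a + b" using X0(4) by blast
      then show ?thesis unfolding T_def by (intro image_eqI[of _ _ "(a,b)"]) auto
    qed
    then show ?thesis by blast
  qed
  then have cl: "closed (T ` (K \<times> X0))" by simp
  have inj: "p = 0" if p: "p \<in> K \<times> X0" and Tp: "T p = 0" for p
  proof -
    obtain a b where ab: "p = (a,b)" "a \<in> K" "b \<in> X0" using p by (cases p) auto
    then have "a = - b" using Tp unfolding T_def by (simp add: eq_neg_iff_add_eq_0)
    then have "a \<in> K \<inter> X0" using subspace_neg[OF X0(1) ab(3)] ab by simp
    then show ?thesis using X0(3) ab \<open>a = - b\<close> by (simp add: zero_prod_def)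
  qed
  obtain c where c: "c > 0" "\<And>p. p \<in> K \<times> X0 \<Longrightarrow> c * norm p \<le> norm (T p)"
    using bounded_below_if_closed_range[OF subspace_Times[OF K(1) X0(1)] closed_Times[OF K(2) X0(2)] T cl inj]
    by metis
  have "c * norm a \<le> norm (a + b)" if "a \<in> K" "b \<in> X0" for a b
  proof -
    have "c * norm a \<le> c * norm (a, b)" using c(1) norm_fst_le[of a b] by (simp add: mult_left_mono)
    also have "\<dots> \<le> norm (a + b)" using c(2)[of "(a, b)"] that unfolding T_def by simp
    finally show ?thesis .
  qed
  with c(1) show ?thesis using that by blast
qed

lemma closed_complement_projection:
  fixes K X0 :: "'a::banach set"
  assumes K: "subspace K" "closed K" and C: "closed_complement K X0"
  obtains P where "bounded_linear P" "\<And>y. P y \<in> K" "\<And>y. y - P y \<in> X0"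
    "\<And>y. P y = 0 \<longleftrightarrow> y \<in> X0" "\<And>k. k \<in> K \<Longrightarrow> P k = k"
proof -
  have X0: "subspace X0" "K \<inter> X0 = {0}" "\<And>x. \<exists>a\<in>K. \<exists>b\<in>X0. x = a + b"
    using C unfolding closed_complement_def by auto
  note uniq = closed_complement_decomposition_unique[OF K(1) X0(1,2)]
  define P where "P y = (THE a. a \<in> K \<and> y - a \<in> X0)" for y
  have P: "P y \<in> K \<and> y - P y \<in> X0" for y
  proof -
    obtain a b where "a \<in> K" "b \<in> X0" "y = a + b" using X0(3) by blast
    then have "\<exists>a. a \<in> K \<and> y - a \<in> X0" by (intro exI[of _ a]) simp
    then have "\<exists>!a. a \<in> K \<and> y - a \<in> X0" using uniq[of _ _ y] by blast
    then show ?thesis unfolding P_def by (rule theI')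
  qed
  have Peq: "P y = a" if "a \<in> K" "y - a \<in> X0" for y a
    using uniq[of "P y" a y] P[of y] that by simp
  have Padd: "P (x + y) = P x + P y" for x y
  proof (rule Peq)
    show "P x + P y \<in> K" using P K(1) subspace_add by blast
    have "(x - P x) + (y - P y) \<in> X0" using P X0(1) subspace_add by blast
    then show "x + y - (P x + P y) \<in> X0" by (simp add: algebra_simps)
  qed
  have Pscale: "P (c *\<^sub>R x) = c *\<^sub>R P x" for c x
  proof (rule Peq)
    show "c *\<^sub>R P x \<in> K" using P K(1) subspace_scale by blast
    have "c *\<^sub>R (x - P x) \<in> X0" using P X0(1) subspace_scale by blast
    then show "c *\<^sub>R x - c *\<^sub>R P x \<in> X0" by (simp add: algebra_simps)
  qed
  obtain c where c: "c > 0" "\<And>a b. a \<in> K \<Longrightarrow> b \<in> X0 \<Longrightarrow> c * norm a \<le> norm (a + b)"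
    using closed_complement_bounded_below[OF K C] by metis
  have "norm (P y) \<le> norm y * (1/c)" for y
    using c(2)[of "P y" "y - P y"] P[of y] c(1) by (simp add: field_simps)
  then have "bounded_linear P" by (rule bounded_linear_intro[OF Padd Pscale])
  moreover have "P y = 0 \<longleftrightarrow> y \<in> X0" for y
    using P[of y] Peq[of 0 y] K(1) subspace_0 by auto
  moreover have "P k = k" if "k \<in> K" for k using Peq[of k k] that X0(1) subspace_0 by auto
  ultimately show ?thesis using that P by blast
qed

section \<open>Flattening charts of the critical manifold\<close>

lemma bounded_linear_bounded_multilinear_list_1:
  assumes "bounded_multilinear_list 1 L"
  shows "bounded_linear (\<lambda>v. L [v])"
proof -
  have add: "L [a + b] = L [a] + L [b]" and sc: "L [c *\<^sub>R a] = c *\<^sub>R L [a]" for a b c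
    using assms unfolding bounded_multilinear_list_def by (metis append.left_neutral list.size(3) add_0)+
  obtain C where C: "\<forall>vs. length vs = 1 \<longrightarrow> norm (L vs) \<le> C * prod_list (map norm vs)"
    using assms unfolding bounded_multilinear_list_def by blast
  have "norm (L [a]) \<le> norm a * C" for a using C[rule_format, of "[a]"] by (simp add: mult.commute)
  then show ?thesis by (intro bounded_linear_intro[of _ C] add sc)
qed

lemma Ck_on_1_imp_continuous_derivative:
  fixes f :: "'a::real_normed_vector \<Rightarrow> 'b::real_normed_vector"
  assumes "Ck_on 1 U f" "open U"
  obtains f' where "\<And>x. x \<in> U \<Longrightarrow> bounded_linear (f' x)"
    "\<And>x. x \<in> U \<Longrightarrow> (f has_derivative f' x) (at x)"
    "\<And>x e. x \<in> U \<Longrightarrow> e > 0 \<Longrightarrow>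
       \<exists>d>0. \<forall>y\<in>U. norm (y - x) < d \<longrightarrow> (\<forall>v. norm (f' y v - f' x v) \<le> e * norm v)"
proof -
  obtain D :: "nat \<Rightarrow> 'a \<Rightarrow> 'a list \<Rightarrow> 'b" where
    D0: "\<forall>x\<in>U. D 0 x [] = f x" and
    ml: "\<forall>j\<le>1. \<forall>x\<in>U. bounded_multilinear_list j (D j x)" and
    ct: "\<forall>j\<le>1. \<forall>x\<in>U. \<forall>e>0. \<exists>d>0. \<forall>y\<in>U. norm (y - x) < d \<longrightarrow>
        (\<forall>vs. length vs = j \<longrightarrow> norm (D j y vs - D j x vs) \<le> e * prod_list (map norm vs))" and
    dr: "\<forall>j<1. \<forall>x\<in>U. \<forall>e>0. \<exists>d>0. \<forall>y\<in>U. norm (y - x) < d \<longrightarrow>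
        (\<forall>vs. length vs = j \<longrightarrow>
           norm (D j y vs - D j x vs - D (Suc j) x ((y - x) # vs))
             \<le> e * norm (y - x) * prod_list (map norm vs))"
    using assms(1) unfolding Ck_on_def by (elim exE conjE) (rule that; assumption)
  define f' where "f' x v = D 1 x [v]" for x v
  have bl: "bounded_linear (f' x)" if "x \<in> U" for x
    unfolding f'_def using ml that by (simp add: bounded_linear_bounded_multilinear_list_1)
  have "(f has_derivative f' x) (at x)" if x: "x \<in> U" for x
    unfolding has_derivative_at_alt
  proof (intro conjI allI impI bl[OF x])
    fix e :: real assume e: "e > 0"
    obtain d1 where d1: "d1 > 0" "\<forall>y\<in>U. norm (y - x) < d1 \<longrightarrow>
        norm (D 0 y [] - D 0 x [] - D 1 x [y - x]) \<le> e * norm (y - x)"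
      using dr[rule_format, OF zero_less_one x e] by fastforce
    obtain d2 where d2: "d2 > 0" "ball x d2 \<subseteq> U" using assms(2) x open_contains_ball by blast
    show "\<exists>d>0. \<forall>y. norm (y - x) < d \<longrightarrow> norm (f y - f x - f' x (y - x)) \<le> e * norm (y - x)"
    proof (intro exI[of _ "min d1 d2"] conjI allI impI)
      show "min d1 d2 > 0" using d1 d2 by simp
      fix y assume y: "norm (y - x) < min d1 d2"
      then have "y \<in> U" using d2 by (auto simp: dist_norm norm_minus_commute)
      then show "norm (f y - f x - f' x (y - x)) \<le> e * norm (y - x)"
        using d1(2) D0 x y unfolding f'_def by simp
    qed
  qed
  moreover have "\<exists>d>0. \<forall>y\<in>U. norm (y - x) < d \<longrightarrow> (\<forall>v. norm (f' y v - f' x v) \<le> e * norm v)"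
    if x: "x \<in> U" and e: "e > 0" for x e
  proof -
    obtain d where d: "d > 0" "\<forall>y\<in>U. norm (y - x) < d \<longrightarrow>
        (\<forall>vs. length vs = 1 \<longrightarrow> norm (D 1 y vs - D 1 x vs) \<le> e * prod_list (map norm vs))"
      using ct[rule_format, OF order_refl x e] by blast
    show ?thesis
    proof (intro exI[of _ d] conjI ballI impI allI d(1))
      fix y v assume "y \<in> U" "norm (y - x) < d"
      then show "norm (f' y v - f' x v) \<le> e * norm v"
        using d(2)[rule_format, of y "[v]"] unfolding f'_def by simp
    qed
  qed
  ultimately show ?thesis using that bl by blast
qed

lemma has_vector_derivative_in_closed_subspace:
  fixes g :: "real \<Rightarrow> 'a::real_normed_vector"
  assumes F: "subspace F" "closed F" and d: "(g has_vector_derivative v) (at 0)"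
    and e: "e > 0" and gF: "\<And>t. \<bar>t\<bar> < e \<Longrightarrow> g t \<in> F"
  shows "v \<in> F"
proof -
  have "v \<in> closure F"
    unfolding closure_approachable
  proof (intro allI impI)
    fix \<epsilon> :: real assume \<epsilon>: "\<epsilon> > 0"
    obtain d where dd: "d > 0" "\<forall>y. norm y < d \<longrightarrow> norm (g y - g 0 - y *\<^sub>R v) \<le> (\<epsilon>/2) * norm y"
      using d \<epsilon> unfolding has_vector_derivative_def has_derivative_at_alt
      by (metis diff_zero half_gt_zero)
    define t where "t = min d e / 2"
    have t: "t > 0" "t < d" "t < e" unfolding t_def using dd e by auto
    \<comment> \<open>The difference quotient (g t - g 0) / t lies in F and is \<epsilon>-close to v.\<close>
    define w where "w = (1/t) *\<^sub>R (g t - g 0)"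
    have wF: "w \<in> F" unfolding w_def
      using gF[of t] gF[of 0] t e F(1) by (simp add: subspace_diff subspace_scale)
    have "w - v = (1/t) *\<^sub>R (g t - g 0 - t *\<^sub>R v)" unfolding w_def using t by (simp add: algebra_simps)
    then have "norm (w - v) = norm (g t - g 0 - t *\<^sub>R v) / t" using t by simp
    also have "\<dots> \<le> (\<epsilon>/2) * t / t" using dd(2)[rule_format, of t] t by (intro divide_right_mono) auto
    also have "\<dots> < \<epsilon>" using t \<epsilon> by simp
    finally show "\<exists>y\<in>F. dist y v < \<epsilon>" using wF by (intro bexI[of _ w]) (auto simp: dist_norm)
  qed
  then show ?thesis using F(2) by simp
qed

lemma derivatives_of_inverse_maps:
  fixes \<phi> :: "'a::real_normed_vector \<Rightarrow> 'b::real_normed_vector" and \<psi> :: "'b \<Rightarrow> 'a"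
  assumes V: "open V" "x0 \<in> V" and W: "open W" "\<phi> x0 \<in> W"
    and \<psi>\<phi>: "\<forall>x\<in>V. \<psi> (\<phi> x) = x" and \<phi>\<psi>: "\<forall>y\<in>W. \<phi> (\<psi> y) = y"
    and C: "(\<phi> has_derivative C) (at x0)" and B: "(\<psi> has_derivative B) (at (\<phi> x0))"
  shows "B (C v) = v" and "C (B w) = w"
proof -
  have "(\<psi> \<circ> \<phi> has_derivative B \<circ> C) (at x0)" by (rule diff_chain_at[OF C B])
  then have "((\<lambda>x. x) has_derivative B \<circ> C) (at x0)"
    by (rule has_derivative_transform_within_open[OF _ V]) (simp add: \<psi>\<phi>)
  then have "B \<circ> C = (\<lambda>x. x)" using has_derivative_ident by (rule has_derivative_unique)
  then show "B (C v) = v" by (metis comp_apply)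
  have "(\<phi> has_derivative C) (at (\<psi> (\<phi> x0)))" using C \<psi>\<phi> V(2) by simp
  then have "(\<phi> \<circ> \<psi> has_derivative C \<circ> B) (at (\<phi> x0))" by (rule diff_chain_at[OF B])
  then have "((\<lambda>y. y) has_derivative C \<circ> B) (at (\<phi> x0))"
    by (rule has_derivative_transform_within_open[OF _ W]) (simp add: \<phi>\<psi>)
  then have "C \<circ> B = (\<lambda>y. y)" using has_derivative_ident by (rule has_derivative_unique)
  then show "C (B w) = w" by (metis comp_apply)
qed

lemma flat_chart_derivative_in_tangent_space:
  fixes \<psi> :: "'a::real_normed_vector \<Rightarrow> 'b::real_normed_vector"
  assumes W: "open W" "f0 \<in> W" and F: "subspace F" "f0 \<in> F"
    and \<psi>S: "\<And>w. w \<in> W \<Longrightarrow> w \<in> F \<Longrightarrow> \<psi> w \<in> S"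
    and B: "(\<psi> has_derivative B) (at f0)" and u: "u \<in> F"
  shows "B u \<in> tangent_space S (\<psi> f0)"
proof -
  interpret B: bounded_linear B using B by (rule has_derivative_bounded_linear)
  obtain r where r: "r > 0" "ball f0 r \<subseteq> W" using W open_contains_ball by blast
  define e where "e = r / (norm u + 1)"
  have e0: "e > 0" unfolding e_def using r by (simp add: add_nonneg_pos)
  have e: "f0 + t *\<^sub>R u \<in> W" if "\<bar>t\<bar> < e" for t
  proof -
    have "\<bar>t\<bar> * norm u \<le> e * norm u" using that by (simp add: mult_right_mono)
    also have "\<dots> = r * (norm u / (norm u + 1))" unfolding e_def by simp
    also have "\<dots> < r * 1"
      using r(1) by (intro mult_strict_left_mono) (simp_all add: add_nonneg_pos divide_less_eq)
    also have "\<dots> = r" by simp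
    finally show ?thesis using r(2) by (auto simp: dist_norm)
  qed
  define \<gamma> where "\<gamma> t = \<psi> (f0 + t *\<^sub>R u)" for t :: real
  have "\<gamma> ` {-e<..<e} \<subseteq> S"
  proof
    fix y assume "y \<in> \<gamma> ` {-e<..<e}"
    then obtain t where t: "t \<in> {-e<..<e}" "y = \<gamma> t" by blast
    then have "\<bar>t\<bar> < e" by auto
    moreover have "f0 + t *\<^sub>R u \<in> F" using F u by (simp add: subspace_add subspace_scale)
    ultimately show "y \<in> S" unfolding t(2) \<gamma>_def using e \<psi>S by blast
  qed
  moreover have "(\<gamma> has_vector_derivative B u) (at 0)"
  proof -
    have "((\<lambda>t. f0 + t *\<^sub>R u) has_derivative (\<lambda>s. s *\<^sub>R u)) (at 0)"
      by (auto intro!: derivative_eq_intros)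
    from diff_chain_at[OF this] B have "(\<psi> \<circ> (\<lambda>t. f0 + t *\<^sub>R u) has_derivative B \<circ> (\<lambda>s. s *\<^sub>R u)) (at 0)"
      by simp
    then show ?thesis unfolding has_vector_derivative_def \<gamma>_def by (simp add: o_def B.scaleR)
  qed
  moreover have "\<gamma> 0 = \<psi> f0" unfolding \<gamma>_def by simp
  ultimately show ?thesis unfolding tangent_space_def using e0 by blast
qed

lemma flat_chart_derivative_of_tangent_vector:
  fixes \<phi> :: "'a::real_normed_vector \<Rightarrow> 'b::real_normed_vector"
  assumes V: "open V" "x0 \<in> V" and F: "subspace F" "closed F"
    and \<phi>S: "\<phi> ` (V \<inter> S) \<subseteq> F" and C: "(\<phi> has_derivative C) (at x0)"
    and k: "k \<in> tangent_space S x0"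
  shows "C k \<in> F"
proof -
  interpret C: bounded_linear C using C by (rule has_derivative_bounded_linear)
  obtain \<gamma> e where \<gamma>: "e > 0" "\<gamma> ` {-e<..<e} \<subseteq> S" "\<gamma> 0 = x0" "(\<gamma> has_vector_derivative k) (at 0)"
    using k unfolding tangent_space_def by blast
  have "isCont \<gamma> 0" using \<gamma>(4) by (rule has_vector_derivative_continuous)
  obtain r where r: "r > 0" "ball x0 r \<subseteq> V" using V open_contains_ball by blast
  then obtain e' where e': "e' > 0" "\<And>t. dist t 0 < e' \<Longrightarrow> dist (\<gamma> t) (\<gamma> 0) < r"
    using \<open>isCont \<gamma> 0\<close> unfolding continuous_at_eps_delta by blast
  have \<gamma>V: "\<gamma> t \<in> V" if "dist t 0 < e'" for t
    using e'(2)[OF that] r(2) \<gamma>(3) by (auto simp: dist_commute)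
  have inF: "(\<phi> \<circ> \<gamma>) t \<in> F" if "\<bar>t\<bar> < min e e'" for t
  proof -
    have "t \<in> {-e<..<e}" using that by auto
    then have "\<gamma> t \<in> S" using \<gamma>(2) by blast
    moreover have "\<gamma> t \<in> V" using that \<gamma>V[of t] by (simp add: dist_real_def)
    ultimately have "\<gamma> t \<in> V \<inter> S" by blast
    then show ?thesis using \<phi>S by auto
  qed
  have der: "(\<phi> \<circ> \<gamma> has_vector_derivative C k) (at 0)"
  proof -
    have "(\<phi> has_derivative C) (at (\<gamma> 0))" using C \<gamma>(3) by simp
    with \<gamma>(4) have "(\<phi> \<circ> \<gamma> has_derivative C \<circ> (\<lambda>t. t *\<^sub>R k)) (at 0)"
      unfolding has_vector_derivative_def by (rule diff_chain_at)
    then show ?thesis unfolding has_vector_derivative_def by (simp add: o_def C.scaleR)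
  qed
  have "min e e' > 0" using \<gamma>(1) e'(1) by simp
  then show ?thesis by (rule has_vector_derivative_in_closed_subspace[OF F der _ inF])
qed

lemma constant_on_convex_critical_image:
  fixes \<psi> :: "'a::real_normed_vector \<Rightarrow> 'b::real_normed_vector"
  assumes D: "convex D" and \<psi>: "\<And>f. f \<in> D \<Longrightarrow> (\<psi> has_derivative \<psi>' f) (at f)"
    and crit: "\<And>f. f \<in> D \<Longrightarrow> \<psi> f \<in> U \<and> E' (\<psi> f) = 0"
    and E_deriv: "\<And>x. x \<in> U \<Longrightarrow> (E has_derivative blinfun_apply (E' x)) (at x)"
    and f: "f \<in> D" and g: "g \<in> D"
  shows "E (\<psi> f) = E (\<psi> g)"
proof -
  have "((\<lambda>f. E (\<psi> f)) has_derivative (\<lambda>h. 0)) (at f within D)" if f: "f \<in> D" for f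
  proof -
    have "(E has_derivative blinfun_apply (E' (\<psi> f))) (at (\<psi> f))" using E_deriv crit[OF f] by blast
    with \<psi>[OF f] have "(E \<circ> \<psi> has_derivative blinfun_apply (E' (\<psi> f)) \<circ> \<psi>' f) (at f)"
      by (rule diff_chain_at)
    then have "((\<lambda>f. E (\<psi> f)) has_derivative (\<lambda>h. 0)) (at f)" using crit[OF f] by (simp add: o_def)
    then show ?thesis by (rule has_derivative_at_withinI)
  qed
  then show ?thesis by (rule has_derivative_zero_unique[OF D _ f g])
qed

lemma half_contraction_fixed_point_in_cball:
  fixes \<Phi> :: "'a::banach \<Rightarrow> 'a"
  assumes F: "closed F" "f0 \<in> F" and r: "r \<ge> 0"
    and maps: "\<And>f. f \<in> F \<inter> cball f0 r \<Longrightarrow> \<Phi> f \<in> F"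
    and lip: "\<And>f g. f \<in> F \<inter> cball f0 r \<Longrightarrow> g \<in> F \<inter> cball f0 r \<Longrightarrow>
      dist (\<Phi> f) (\<Phi> g) \<le> (1/2) * dist f g"
    and start: "dist (\<Phi> f0) f0 \<le> r / 2"
  obtains f where "f \<in> F \<inter> cball f0 r" "\<Phi> f = f"
proof -
  have f0: "f0 \<in> F \<inter> cball f0 r" using F r by simp
  have "\<Phi> f \<in> F \<inter> cball f0 r" if f: "f \<in> F \<inter> cball f0 r" for f
  proof -
    have "dist (\<Phi> f) (\<Phi> f0) \<le> r / 2" using lip[OF f f0] f by (simp add: dist_commute)
    then have "dist f0 (\<Phi> f) \<le> r"
      using start dist_triangle[of f0 "\<Phi> f" "\<Phi> f0"] by (simp add: dist_commute)
    then show ?thesis using maps[OF f] by simp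
  qed
  moreover have "complete (F \<inter> cball f0 r)" using F(1) by (simp add: complete_eq_closed closed_Int)
  ultimately have "\<exists>!f\<in>F \<inter> cball f0 r. \<Phi> f = f"
    using f0 lip by (intro Banach_fix[of _ "1/2"]) auto
  then show ?thesis using that by blast
qed

lemma linearization_error_lipschitz_near:
  fixes \<psi> :: "'a::real_normed_vector \<Rightarrow> 'b::real_normed_vector"
  assumes W: "open W" "f0 \<in> W"
    and \<psi>: "\<And>y. y \<in> W \<Longrightarrow> (\<psi> has_derivative \<psi>' y) (at y)"
    and \<psi>'_cont: "\<And>e. e > 0 \<Longrightarrow>
      \<exists>d>0. \<forall>y\<in>W. norm (y - f0) < d \<longrightarrow> (\<forall>v. norm (\<psi>' y v - \<psi>' f0 v) \<le> e * norm v)"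
    and \<eta>: "\<eta> > 0"
  obtains r where "r > 0" "cball f0 r \<subseteq> W"
    "\<And>f g. f \<in> cball f0 r \<Longrightarrow> g \<in> cball f0 r \<Longrightarrow>
       norm ((\<psi> f - \<psi>' f0 f) - (\<psi> g - \<psi>' f0 g)) \<le> \<eta> * norm (f - g)"
proof -
  interpret B: bounded_linear "\<psi>' f0" using \<psi>[OF W(2)] by (rule has_derivative_bounded_linear)
  obtain r0 where r0: "r0 > 0" "ball f0 r0 \<subseteq> W" using W open_contains_ball by blast
  obtain r1 where r1: "r1 > 0" "\<forall>y\<in>W. norm (y - f0) < r1 \<longrightarrow> (\<forall>v. norm (\<psi>' y v - \<psi>' f0 v) \<le> \<eta> * norm v)"
    using \<psi>'_cont[OF \<eta>] by blast
  define r where "r = min r0 r1 / 2"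
  have r: "r > 0" "cball f0 r \<subseteq> W" "\<And>y. y \<in> cball f0 r \<Longrightarrow> norm (y - f0) < r1"
    unfolding r_def using r0 r1 by (auto simp: dist_norm norm_minus_commute)
  have "norm ((\<psi> f - \<psi>' f0 f) - (\<psi> g - \<psi>' f0 g)) \<le> \<eta> * norm (f - g)"
    if "f \<in> cball f0 r" "g \<in> cball f0 r" for f g
  proof (rule differentiable_bound[OF convex_cball _ _ that])
    fix z assume z: "z \<in> cball f0 r"
    then have "(\<psi> has_derivative \<psi>' z) (at z within cball f0 r)"
      using \<psi> r(2) by (blast intro: has_derivative_at_withinI)
    then show "((\<lambda>y. \<psi> y - \<psi>' f0 y) has_derivative (\<lambda>v. \<psi>' z v - \<psi>' f0 v)) (at z within cball f0 r)"
      by (rule has_derivative_diff[OF _ B.has_derivative[OF has_derivative_ident]])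
    have "\<forall>v. norm (\<psi>' z v - \<psi>' f0 v) \<le> \<eta> * norm v" using r1(2) r z by blast
    then show "onorm (\<lambda>v. \<psi>' z v - \<psi>' f0 v) \<le> \<eta>" using \<eta> by (intro onorm_bound) auto
  qed
  with r(1,2) show ?thesis using that by blast
qed

text \<open>A fixed point argument in the chart: for x near \<psi> p, the map
  \<Phi> f = f - C (P (\<psi> f - x)) is a contraction of a small ball of F, because \<Phi> differs from the
  identity only by C P applied to the linearisation error of \<psi>.\<close>
lemma chart_point_with_offset_in_kernel:
  fixes \<psi> C P :: "'a::banach \<Rightarrow> 'a"
  assumes W: "open W" "p \<in> W" and F: "subspace F" "closed F" "p \<in> F"
    and \<psi>: "\<And>y. y \<in> W \<Longrightarrow> (\<psi> has_derivative \<psi>' y) (at y)"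
    and \<psi>'_cont: "\<And>e. e > 0 \<Longrightarrow>
      \<exists>d>0. \<forall>y\<in>W. norm (y - p) < d \<longrightarrow> (\<forall>v. norm (\<psi>' y v - \<psi>' p v) \<le> e * norm v)"
    and C: "bounded_linear C" and BC: "\<And>v. \<psi>' p (C v) = v" and CB: "\<And>v. C (\<psi>' p v) = v"
    and P: "bounded_linear P" and PB: "\<And>u. u \<in> F \<Longrightarrow> P (\<psi>' p u) = \<psi>' p u"
    and CPF: "\<And>y. C (P y) \<in> F" and \<rho>: "\<rho> > 0"
  obtains \<sigma> r where "\<sigma> > 0" "r \<le> \<rho>" "cball p r \<subseteq> W"
    "\<And>x. norm (x - \<psi> p) < \<sigma> \<Longrightarrow> \<exists>f\<in>F \<inter> cball p r. P (\<psi> f - x) = 0"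
proof -
  interpret B: bounded_linear "\<psi>' p" using \<psi>[OF W(2)] by (rule has_derivative_bounded_linear)
  interpret CP: bounded_linear "\<lambda>v. C (P v)" using bounded_linear_compose[OF C P] .
  obtain K where K: "K > 0" "\<And>v. norm (C (P v)) \<le> norm v * K" using CP.pos_bounded by blast
  obtain r1 where r1: "r1 > 0" "cball p r1 \<subseteq> W"
    and H: "\<And>f g. f \<in> cball p r1 \<Longrightarrow> g \<in> cball p r1 \<Longrightarrow>
       norm ((\<psi> f - \<psi>' p f) - (\<psi> g - \<psi>' p g)) \<le> (1 / (2 * K)) * norm (f - g)"
    using linearization_error_lipschitz_near[OF W \<psi> \<psi>'_cont, of "1 / (2 * K)"] K(1) by auto
  define r where "r = min \<rho> r1"
  have r: "r > 0" "r \<le> \<rho>" "cball p r \<subseteq> cball p r1"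
    unfolding r_def using \<rho>(1) r1(1) by (simp_all add: subset_cball)
  define \<sigma> where "\<sigma> = r / (2 * K)"
  have "\<exists>f\<in>F \<inter> cball p r. P (\<psi> f - x) = 0" if x: "norm (x - \<psi> p) < \<sigma>" for x
  proof -
    define \<Phi> where "\<Phi> f = f - C (P (\<psi> f - x))" for f
    have lip: "dist (\<Phi> f) (\<Phi> g) \<le> (1/2) * dist f g"
      if f: "f \<in> F \<inter> cball p r" and g: "g \<in> F \<inter> cball p r" for f g
    proof -
      have "f - g \<in> F" using f g F(1) subspace_diff by blast
      then have fg: "f - g = C (P (\<psi>' p (f - g)))" using PB CB by simp
      have "(\<psi> f - \<psi>' p f) - (\<psi> g - \<psi>' p g) = ((\<psi> f - x) - (\<psi> g - x)) - \<psi>' p (f - g)"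
        by (simp add: B.diff algebra_simps)
      then have "C (P ((\<psi> f - \<psi>' p f) - (\<psi> g - \<psi>' p g)))
          = (C (P (\<psi> f - x)) - C (P (\<psi> g - x))) - C (P (\<psi>' p (f - g)))"
        by (simp only: CP.diff)
      then have "\<Phi> f - \<Phi> g = - C (P ((\<psi> f - \<psi>' p f) - (\<psi> g - \<psi>' p g)))"
        unfolding \<Phi>_def using fg by (simp add: algebra_simps)
      then have "norm (\<Phi> f - \<Phi> g) \<le> norm ((\<psi> f - \<psi>' p f) - (\<psi> g - \<psi>' p g)) * K"
        using K(2) by (simp only: norm_minus_cancel)
      also have "\<dots> \<le> (1 / (2 * K)) * norm (f - g) * K"
      proof -
        have "f \<in> cball p r1" "g \<in> cball p r1" using f g r(3) by auto
        from mult_right_mono[OF H[OF this] less_imp_le[OF K(1)]] show ?thesis .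
      qed
      finally show ?thesis using K(1) by (simp add: dist_norm)
    qed
    have "dist (\<Phi> p) p = norm (C (P (\<psi> p - x)))" unfolding \<Phi>_def by (simp add: dist_norm)
    also have "\<dots> \<le> norm (\<psi> p - x) * K" by (rule K(2))
    also have "\<dots> \<le> \<sigma> * K" using K(1) x by (simp add: norm_minus_commute)
    also have "\<dots> = r / 2" unfolding \<sigma>_def using K(1) by simp
    finally have "dist (\<Phi> p) p \<le> r / 2" .
    moreover have "\<Phi> f \<in> F" if "f \<in> F \<inter> cball p r" for f
      using that CPF F(1) unfolding \<Phi>_def by (blast intro: subspace_diff)
    ultimately obtain f where f: "f \<in> F \<inter> cball p r" "\<Phi> f = f"
      using half_contraction_fixed_point_in_cball[OF F(2,3), of r \<Phi>] r(1) lip by auto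
    then have "C (P (\<psi> f - x)) = 0" unfolding \<Phi>_def by simp
    then have "P (\<psi> f - x) = 0" using BC[of "P (\<psi> f - x)"] by simp
    with f(1) show ?thesis by blast
  qed
  moreover have "\<sigma> > 0" unfolding \<sigma>_def using r K by simp
  ultimately show ?thesis using that r r1(2) by blast
qed

lemma morse_bott_flat_chart:
  fixes U :: "'x::banach set" and x0 :: 'x
  assumes morse_bott: "morse_bott_at U E1 E2 x0" and x0: "x0 \<in> U" "E1 x0 = 0"
  obtains W F :: "'x set" and f0 :: 'x and \<psi> :: "'x \<Rightarrow> 'x" and \<psi>' C
  where "open W" "subspace F" "closed F" "f0 \<in> W" "f0 \<in> F" "\<psi> f0 = x0"
    "\<And>w. w \<in> W \<Longrightarrow> w \<in> F \<Longrightarrow> \<psi> w \<in> U \<and> E1 (\<psi> w) = 0"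
    "\<And>y. y \<in> W \<Longrightarrow> (\<psi> has_derivative \<psi>' y) (at y)"
    "\<And>e. e > 0 \<Longrightarrow>
      \<exists>d>0. \<forall>y\<in>W. norm (y - f0) < d \<longrightarrow> (\<forall>v. norm (\<psi>' y v - \<psi>' f0 v) \<le> e * norm v)"
    "bounded_linear C" "\<And>v. \<psi>' f0 (C v) = v" "\<And>v. C (\<psi>' f0 v) = v"
    "\<And>u. u \<in> F \<Longrightarrow> blinfun_apply (E2 x0) (\<psi>' f0 u) = 0"
    "\<And>k. blinfun_apply (E2 x0) k = 0 \<Longrightarrow> C k \<in> F"
proof -
  obtain V0 where V0: "open V0" "x0 \<in> V0" "V0 \<subseteq> U" "smooth_submanifold (V0 \<inter> crit U E1)"
      "tangent_space (V0 \<inter> crit U E1) x0 = {v. blinfun_apply (E2 x0) v = 0}"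
    using morse_bott unfolding morse_bott_at_def by blast
  define S where "S = V0 \<inter> crit U E1"
  have xS: "x0 \<in> S" unfolding S_def crit_def using V0(2) x0 by blast
  obtain V W and \<phi> \<psi> :: "'x \<Rightarrow> 'x" and F where ch: "open V" "x0 \<in> V" "open W" "\<phi> ` V = W"
      "\<forall>x\<in>V. \<psi> (\<phi> x) = x" "\<forall>y\<in>W. \<phi> (\<psi> y) = y" "smooth_on V \<phi>" "smooth_on W \<psi>"
      "subspace F" "closed F" "\<phi> ` (V \<inter> S) = W \<inter> F"
    using V0(4) xS unfolding smooth_submanifold_def S_def by metis
  obtain \<phi>' where \<phi>': "\<And>x. x \<in> V \<Longrightarrow> (\<phi> has_derivative \<phi>' x) (at x)"
    using Ck_on_1_imp_continuous_derivative[OF _ ch(1)] ch(7) unfolding smooth_on_def by metis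
  obtain \<psi>' where \<psi>': "\<And>y. y \<in> W \<Longrightarrow> (\<psi> has_derivative \<psi>' y) (at y)"
    and \<psi>'_cont: "\<And>y e. y \<in> W \<Longrightarrow> e > 0 \<Longrightarrow>
       \<exists>d>0. \<forall>z\<in>W. norm (z - y) < d \<longrightarrow> (\<forall>v. norm (\<psi>' z v - \<psi>' y v) \<le> e * norm v)"
    using Ck_on_1_imp_continuous_derivative[OF _ ch(3)] ch(8) unfolding smooth_on_def by metis
  define f0 where "f0 = \<phi> x0"
  have f0: "f0 \<in> W" "f0 \<in> F" using ch(11) xS ch(2) unfolding f0_def by blast+
  have \<psi>f0: "\<psi> f0 = x0" unfolding f0_def using ch(5) ch(2) by blast
  have \<psi>S: "\<psi> w \<in> S" if "w \<in> W" "w \<in> F" for w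
  proof -
    from that ch(11) obtain v where "v \<in> V \<inter> S" "w = \<phi> v" by (metis IntI imageE)
    then show ?thesis using ch(5) by simp
  qed
  have Cbl: "bounded_linear (\<phi>' x0)" using \<phi>' ch(2) by (blast intro: has_derivative_bounded_linear)
  have \<phi>d: "(\<phi> has_derivative \<phi>' x0) (at x0)" and \<psi>d: "(\<psi> has_derivative \<psi>' f0) (at (\<phi> x0))"
    using \<phi>' \<psi>' ch(2) f0(1) unfolding f0_def by blast+
  note inv = derivatives_of_inverse_maps[OF ch(1,2,3) f0(1)[unfolded f0_def] ch(5,6) \<phi>d \<psi>d,
      unfolded f0_def[symmetric]]
  show ?thesis
  proof (rule that[of W F f0 \<psi> \<psi>' "\<phi>' x0"])
    show "open W" "subspace F" "closed F" "f0 \<in> W" "f0 \<in> F" "\<psi> f0 = x0" "bounded_linear (\<phi>' x0)"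
      using ch(3,9,10) f0 \<psi>f0 Cbl by simp_all
    show "\<psi>' f0 (\<phi>' x0 v) = v" "\<phi>' x0 (\<psi>' f0 v) = v" for v by (fact inv)+
    show "(\<psi> has_derivative \<psi>' y) (at y)" if "y \<in> W" for y using \<psi>' that .
    show "\<exists>d>0. \<forall>y\<in>W. norm (y - f0) < d \<longrightarrow> (\<forall>v. norm (\<psi>' y v - \<psi>' f0 v) \<le> e * norm v)"
      if "e > 0" for e using \<psi>'_cont f0(1) that .
    show "\<psi> w \<in> U \<and> E1 (\<psi> w) = 0" if "w \<in> W" "w \<in> F" for w
      using \<psi>S[OF that] unfolding S_def crit_def by blast
    show "blinfun_apply (E2 x0) (\<psi>' f0 u) = 0" if "u \<in> F" for u
      using flat_chart_derivative_in_tangent_space[OF ch(3) f0(1) ch(9) f0(2) \<psi>S \<psi>' [OF f0(1)] that]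
      unfolding \<psi>f0 V0(5)[folded S_def] by simp
    show "\<phi>' x0 k \<in> F" if "blinfun_apply (E2 x0) k = 0" for k
      using flat_chart_derivative_of_tangent_vector[OF ch(1,2,9,10) _ \<phi>d, of S k] ch(11) that
      unfolding V0(5)[folded S_def] by blast
  qed
qed

lemma morse_bott_nearby_critical_point:
  fixes U :: "'x::banach set" and x0 :: 'x and E :: "'x \<Rightarrow> real"
  assumes U: "open U" and x0: "x0 \<in> U" "E1 x0 = 0"
    and E_deriv: "\<And>x. x \<in> U \<Longrightarrow> (E has_derivative blinfun_apply (E1 x)) (at x)"
    and morse_bott: "morse_bott_at U E1 E2 x0"
    and X0: "closed_complement {v. blinfun_apply (E2 x0) v = 0} X0"
    and \<delta>: "\<delta> > 0"
  obtains \<sigma> where "\<sigma> > 0" "\<And>x. norm (x - x0) < \<sigma> \<Longrightarrow>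
    \<exists>xc\<in>U. E1 xc = 0 \<and> E xc = E x0 \<and> norm (xc - x0) < \<delta> \<and> x - xc \<in> X0"
proof -
  define K where "K = {v. blinfun_apply (E2 x0) v = 0}"
  have K: "subspace K" "closed K" unfolding K_def subspace_def
    by (simp_all add: blinfun.add_right blinfun.scaleR_right blinfun.zero_right closed_Collect_eq continuous_intros)
  obtain P where P: "bounded_linear P" "\<And>y. P y \<in> K" "\<And>y. P y = 0 \<longleftrightarrow> y \<in> X0"
      "\<And>k. k \<in> K \<Longrightarrow> P k = k"
    using closed_complement_projection[OF K X0[folded K_def]] by metis
  show ?thesis
  proof (rule morse_bott_flat_chart[OF morse_bott x0])
    fix W F :: "'x set" and f0 :: 'x and \<psi> C :: "'x \<Rightarrow> 'x" and \<psi>' :: "'x \<Rightarrow> 'x \<Rightarrow> 'x"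
    assume W: "open W" and F: "subspace F" "closed F" and f0: "f0 \<in> W" "f0 \<in> F"
      and \<psi>f0: "\<psi> f0 = x0" and crit: "\<And>w. w \<in> W \<Longrightarrow> w \<in> F \<Longrightarrow> \<psi> w \<in> U \<and> E1 (\<psi> w) = 0"
      and \<psi>: "\<And>y. y \<in> W \<Longrightarrow> (\<psi> has_derivative \<psi>' y) (at y)"
      and \<psi>'_cont: "\<And>e. e > 0 \<Longrightarrow>
        \<exists>d>0. \<forall>y\<in>W. norm (y - f0) < d \<longrightarrow> (\<forall>v. norm (\<psi>' y v - \<psi>' f0 v) \<le> e * norm v)"
      and C: "bounded_linear C" "\<And>v. \<psi>' f0 (C v) = v" "\<And>v. C (\<psi>' f0 v) = v"
      and BF: "\<And>u. u \<in> F \<Longrightarrow> blinfun_apply (E2 x0) (\<psi>' f0 u) = 0"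
      and CK: "\<And>k. blinfun_apply (E2 x0) k = 0 \<Longrightarrow> C k \<in> F"
    have PB: "P (\<psi>' f0 u) = \<psi>' f0 u" if "u \<in> F" for u using P(4) BF[OF that] unfolding K_def by blast
    have CPF: "C (P y) \<in> F" for y using CK P(2)[of y] unfolding K_def by blast
    have "isCont \<psi> f0" using \<psi>[OF f0(1)] by (rule has_derivative_continuous)
    then obtain r0 where r0: "r0 > 0" "\<forall>y. dist y f0 < r0 \<longrightarrow> dist (\<psi> y) (\<psi> f0) < \<delta>"
      using \<delta> unfolding continuous_at_eps_delta by blast
    obtain \<sigma> r where \<sigma>: "\<sigma> > 0" and r: "r \<le> r0 / 2" "cball f0 r \<subseteq> W"
      and offset: "\<And>x. norm (x - \<psi> f0) < \<sigma> \<Longrightarrow> \<exists>f\<in>F \<inter> cball f0 r. P (\<psi> f - x) = 0"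
      using chart_point_with_offset_in_kernel[where W = W and p = f0 and F = F and \<psi> = \<psi> and \<psi>' = \<psi>'
        and C = C and P = P and \<rho> = "r0 / 2", OF W f0(1) F f0(2) \<psi> \<psi>'_cont C P(1) PB CPF half_gt_zero[OF r0(1)]]
      by metis
    have "\<exists>xc\<in>U. E1 xc = 0 \<and> E xc = E x0 \<and> norm (xc - x0) < \<delta> \<and> x - xc \<in> X0"
      if x: "norm (x - x0) < \<sigma>" for x
    proof -
      obtain f where f: "f \<in> F \<inter> cball f0 r" "P (\<psi> f - x) = 0" using offset x \<psi>f0 by blast
      have D: "F \<inter> cball f0 r \<subseteq> W \<inter> F" using r(2) by blast
      have "convex (F \<inter> cball f0 r)" using F(1) by (simp add: convex_Int subspace_imp_convex)
      then have "E (\<psi> f) = E (\<psi> f0)"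
      proof (rule constant_on_convex_critical_image[where \<psi> = \<psi> and \<psi>' = \<psi>' and U = U and E' = E1 and E = E])
        show "(\<psi> has_derivative \<psi>' g) (at g)" if "g \<in> F \<inter> cball f0 r" for g using \<psi> D that by blast
        show "\<psi> g \<in> U \<and> E1 (\<psi> g) = 0" if "g \<in> F \<inter> cball f0 r" for g using crit D that by blast
        show "f \<in> F \<inter> cball f0 r" by (fact f(1))
        have "0 \<le> r" using f(1) order_trans[OF zero_le_dist[of f0 f]] by auto
        then show "f0 \<in> F \<inter> cball f0 r" using f0(2) by simp
      qed (fact E_deriv)
      moreover have "dist f f0 < r0" using f(1) r(1) r0(1) by (simp add: dist_commute)
      then have "norm (\<psi> f - x0) < \<delta>" using r0(2) \<psi>f0 by (simp add: dist_norm)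
      moreover have "P (x - \<psi> f) = - P (\<psi> f - x)"
        using linear_neg[OF bounded_linear.linear[OF P(1)], of "\<psi> f - x"] by simp
      then have "P (x - \<psi> f) = 0" using f(2) by simp
      then have "x - \<psi> f \<in> X0" using P(3) by blast
      moreover have "\<psi> f \<in> U \<and> E1 (\<psi> f) = 0" using crit[of f] D f(1) by blast
      ultimately show ?thesis unfolding \<psi>f0 by blast
    qed
    with \<sigma> show thesis using that by blast
  qed
qed

section \<open>Estimates along a segment\<close>

lemma gradient_zero_at_critical_point:
  fixes iX :: "'x::real_normed_vector \<Rightarrow>\<^sub>L 'g::real_normed_vector"
    and jY :: "'y::real_normed_vector \<Rightarrow>\<^sub>L 'h::real_normed_vector"
    and jH :: "'h \<Rightarrow>\<^sub>L ('g \<Rightarrow>\<^sub>L real)"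
  assumes emb_HG: "inj (blinfun_apply jH)"
    and emb_GX: "inj (\<lambda>\<phi>::'g \<Rightarrow>\<^sub>L real. \<phi> o\<^sub>L iX)"
    and grad: "\<And>v. blinfun_apply D v = blinfun_apply (jH (jY m)) (iX v)"
    and crit: "D = 0"
  shows "jY m = 0"
proof -
  have "jH (jY m) o\<^sub>L iX = 0 o\<^sub>L iX"
    by (rule blinfun_eqI) (simp add: grad[symmetric] crit)
  then have "jH (jY m) = jH 0" using injD[OF emb_GX] by (simp add: blinfun.zero_right)
  then show ?thesis by (rule injD[OF emb_HG])
qed

lemma bounded_below_on_kernel_complement:
  fixes A :: "'a::banach \<Rightarrow>\<^sub>L 'b::banach"
  assumes G0: "closed_complement {g. blinfun_apply A g = 0} G0" and ran: "closed (range (blinfun_apply A))"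
  obtains c where "c > 0" "\<And>g. g \<in> G0 \<Longrightarrow> c * norm g \<le> norm (A g)"
proof -
  have G: "subspace G0" "closed G0" "{g. A g = 0} \<inter> G0 = {0}" "\<And>g. \<exists>a\<in>{g. A g = 0}. \<exists>b\<in>G0. g = a + b"
    using G0 unfolding closed_complement_def by auto
  have "range (blinfun_apply A) \<subseteq> A ` G0"
  proof
    fix y assume "y \<in> range (blinfun_apply A)"
    then obtain g where g: "y = A g" by blast
    obtain a b where "A a = 0" "b \<in> G0" "g = a + b" using G(4) by blast
    then show "y \<in> A ` G0" unfolding g by (simp add: blinfun.add_right)
  qed
  then have "A ` G0 = range (blinfun_apply A)" by blast
  then have "closed (A ` G0)" using ran by simp
  moreover have "g = 0" if "g \<in> G0" "A g = 0" for g using G(3) that by blast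
  ultimately show ?thesis
    by (rule bounded_below_if_closed_range[OF G(1,2) blinfun.bounded_linear_right])
      (assumption | (rule that; assumption))+
qed

lemma segment_point_in_ball:
  fixes a b c :: "'a::real_normed_vector"
  assumes "a \<in> ball c r" "b \<in> ball c r" "t \<in> {0..1}"
  shows "a + t *\<^sub>R (b - a) \<in> ball c r"
proof -
  have "a + t *\<^sub>R (b - a) = (1 - t) *\<^sub>R a + t *\<^sub>R b" by (simp add: algebra_simps)
  then show ?thesis using convexD_alt[OF convex_ball assms(1,2), of t] assms(3) by simp
qed

lemma linearization_error_on_segment:
  fixes iX :: "'x::real_normed_vector \<Rightarrow>\<^sub>L 'g::real_normed_vector"
    and N :: "'x \<Rightarrow> 'h::real_normed_vector" and L :: "'x \<Rightarrow> ('g \<Rightarrow>\<^sub>L 'h)"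
  assumes seg: "\<And>t. t \<in> {0..1} \<Longrightarrow> xc + t *\<^sub>R (x - xc) \<in> U"
    and near: "\<And>t. t \<in> {0..1} \<Longrightarrow> norm (L (xc + t *\<^sub>R (x - xc)) - A) \<le> \<epsilon>"
    and N_deriv: "\<And>z. z \<in> U \<Longrightarrow> (N has_derivative N' z) (at z)"
    and N'_ext: "\<And>z v. z \<in> U \<Longrightarrow> N' z v = L z (iX v)"
    and N0: "N xc = 0"
  shows "norm (N x - A (iX (x - xc))) \<le> \<epsilon> * norm (iX (x - xc))"
proof -
  define h where "h = x - xc"
  define g where "g = iX h"
  define z where "z t = xc + t *\<^sub>R h" for t :: real
  have \<epsilon>: "\<epsilon> \<ge> 0" using order_trans[OF norm_ge_zero near[of 0]] by simp
  \<comment> \<open>Mean value inequality for t \<mapsto> N (z t) - t A g, whose derivative is (L (z t) - A) g.\<close>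
  define \<phi> where "\<phi> t = N (z t) - t *\<^sub>R A g" for t
  have "(\<phi> has_derivative (\<lambda>s. s *\<^sub>R (L (z t) g - A g))) (at t within {0..1})" if t: "t \<in> {0..1}" for t
  proof -
    have zU: "z t \<in> U" using seg[OF t] unfolding z_def h_def .
    interpret N': bounded_linear "N' (z t)" using N_deriv[OF zU] by (rule has_derivative_bounded_linear)
    have "(z has_derivative (\<lambda>s. s *\<^sub>R h)) (at t)" unfolding z_def by (auto intro!: derivative_eq_intros)
    from this N_deriv[OF zU] have "(N \<circ> z has_derivative N' (z t) \<circ> (\<lambda>s. s *\<^sub>R h)) (at t)"
      by (rule diff_chain_at)
    then have "(\<phi> has_derivative (\<lambda>s. N' (z t) (s *\<^sub>R h) - s *\<^sub>R A g)) (at t)"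
      unfolding \<phi>_def by (auto simp: o_def intro!: derivative_eq_intros)
    moreover have "N' (z t) (s *\<^sub>R h) - s *\<^sub>R A g = s *\<^sub>R (L (z t) g - A g)" for s
      using N'_ext[OF zU] unfolding g_def by (simp add: N'.scaleR scaleR_diff_right blinfun.scaleR_right)
    ultimately show ?thesis by (simp add: has_derivative_at_withinI)
  qed
  moreover have "onorm (\<lambda>s. s *\<^sub>R (L (z t) g - A g)) \<le> \<epsilon> * norm g" if t: "t \<in> {0..1}" for t
  proof (rule onorm_bound)
    have "norm (L (z t) g - A g) \<le> norm (L (z t) - A) * norm g"
      using norm_blinfun[of "L (z t) - A" g] by (simp add: blinfun.diff_left)
    also have "\<dots> \<le> \<epsilon> * norm g" using near[OF t] unfolding z_def h_def by (intro mult_right_mono) auto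
    finally show "norm (s *\<^sub>R (L (z t) g - A g)) \<le> \<epsilon> * norm g * norm s" for s
      by (simp add: mult.commute mult_left_mono)
  qed (use \<epsilon> in simp)
  ultimately have "norm (\<phi> 1 - \<phi> 0) \<le> \<epsilon> * norm g * norm (1 - 0 :: real)"
    by (intro differentiable_bound[OF convex_real_interval(5)]) auto
  then show ?thesis unfolding \<phi>_def z_def g_def h_def using N0 by simp
qed

lemma gradient_norm_on_segment:
  fixes iX :: "'x::real_normed_vector \<Rightarrow>\<^sub>L 'g::real_normed_vector"
    and N :: "'x \<Rightarrow> 'h::real_normed_vector" and L :: "'x \<Rightarrow> ('g \<Rightarrow>\<^sub>L 'h)"
  assumes seg: "\<And>t. t \<in> {0..1} \<Longrightarrow> xc + t *\<^sub>R (x - xc) \<in> U"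
    and near: "\<And>t. t \<in> {0..1} \<Longrightarrow> norm (L (xc + t *\<^sub>R (x - xc)) - A) \<le> \<epsilon>"
    and N_deriv: "\<And>z. z \<in> U \<Longrightarrow> (N has_derivative N' z) (at z)"
    and N'_ext: "\<And>z v. z \<in> U \<Longrightarrow> N' z v = L z (iX v)"
    and N0: "N xc = 0" and t: "t \<in> {0..1}"
  shows "norm (N (xc + t *\<^sub>R (x - xc))) \<le> (norm A + \<epsilon>) * norm (iX (x - xc))"
proof -
  define g where "g = iX (x - xc)"
  define z where "z = xc + t *\<^sub>R (x - xc)"
  have \<epsilon>: "\<epsilon> \<ge> 0" using order_trans[OF norm_ge_zero near[of 0]] by simp
  \<comment> \<open>Apply the linearization estimate to the subsegment from xc to z.\<close>
  have "xc + s *\<^sub>R (z - xc) = xc + (s * t) *\<^sub>R (x - xc)" for s unfolding z_def by simp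
  moreover have "s * t \<in> {0..1}" if "s \<in> {0..1}" for s using that t by (auto intro: mult_le_one)
  ultimately have "norm (N z - A (iX (z - xc))) \<le> \<epsilon> * norm (iX (z - xc))"
    using seg near by (intro linearization_error_on_segment[OF _ _ N_deriv N'_ext N0]) auto
  moreover have "iX (z - xc) = t *\<^sub>R g" unfolding z_def g_def by (simp add: blinfun.scaleR_right)
  moreover have "norm (A (t *\<^sub>R g)) \<le> norm A * norm g"
  proof -
    have "norm (A (t *\<^sub>R g)) = t * norm (A g)" using t by (simp add: blinfun.scaleR_right)
    also have "\<dots> \<le> norm (A g)" using t by (simp add: mult_left_le_one_le)
    also have "\<dots> \<le> norm A * norm g" by (rule norm_blinfun)
    finally show ?thesis .
  qed
  moreover have "\<epsilon> * norm (t *\<^sub>R g) \<le> \<epsilon> * norm g" using t \<epsilon> by (simp add: mult_left_le_one_le mult_left_mono)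
  ultimately show ?thesis
    using norm_triangle_ineq2[of "N z" "A (t *\<^sub>R g)"] unfolding z_def g_def by (simp add: algebra_simps)
qed

lemma energy_difference_on_segment:
  fixes iX :: "'x::real_normed_vector \<Rightarrow>\<^sub>L 'g::real_normed_vector"
    and jH :: "'h::real_normed_vector \<Rightarrow>\<^sub>L ('g \<Rightarrow>\<^sub>L real)"
    and N :: "'x \<Rightarrow> 'h" and L :: "'x \<Rightarrow> ('g \<Rightarrow>\<^sub>L 'h)" and E :: "'x \<Rightarrow> real"
  assumes seg: "\<And>t. t \<in> {0..1} \<Longrightarrow> xc + t *\<^sub>R (x - xc) \<in> U"
    and near: "\<And>t. t \<in> {0..1} \<Longrightarrow> norm (L (xc + t *\<^sub>R (x - xc)) - A) \<le> \<epsilon>"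
    and E_deriv: "\<And>z. z \<in> U \<Longrightarrow> (E has_derivative blinfun_apply (E' z)) (at z)"
    and grad: "\<And>z v. z \<in> U \<Longrightarrow> blinfun_apply (E' z) v = blinfun_apply (jH (N z)) (iX v)"
    and N_deriv: "\<And>z. z \<in> U \<Longrightarrow> (N has_derivative N' z) (at z)"
    and N'_ext: "\<And>z v. z \<in> U \<Longrightarrow> N' z v = L z (iX v)"
    and N0: "N xc = 0"
  shows "\<bar>E x - E xc\<bar> \<le> norm jH * (norm A + \<epsilon>) * (norm (iX (x - xc)))\<^sup>2"
proof -
  define h where "h = x - xc"
  define g where "g = iX h"
  define z where "z t = xc + t *\<^sub>R h" for t :: real
  have zU: "z t \<in> U" if "t \<in> {0..1}" for t using seg[OF that] unfolding z_def h_def .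
  have \<epsilon>: "\<epsilon> \<ge> 0" using order_trans[OF norm_ge_zero near[of 0]] by simp
  have Nz: "norm (N (z t)) \<le> (norm A + \<epsilon>) * norm g" if "t \<in> {0..1}" for t
    unfolding z_def g_def h_def
    by (rule gradient_norm_on_segment[where xc = xc and x = x, OF seg near N_deriv N'_ext N0 that])
  have "((\<lambda>t. E (z t)) has_derivative (\<lambda>s. E' (z t) (s *\<^sub>R h))) (at t within {0..1})" if t: "t \<in> {0..1}" for t
  proof -
    have "(z has_derivative (\<lambda>s. s *\<^sub>R h)) (at t)" unfolding z_def by (auto intro!: derivative_eq_intros)
    from this E_deriv[OF zU[OF t]] have "(E \<circ> z has_derivative E' (z t) \<circ> (\<lambda>s. s *\<^sub>R h)) (at t)"
      by (rule diff_chain_at)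
    then show ?thesis by (simp add: o_def has_derivative_at_withinI)
  qed
  moreover have "onorm (\<lambda>s. E' (z t) (s *\<^sub>R h)) \<le> norm jH * (norm A + \<epsilon>) * (norm g)\<^sup>2" if t: "t \<in> {0..1}" for t
  proof (rule onorm_bound)
    fix s
    have "\<bar>jH (N (z t)) g\<bar> \<le> norm (jH (N (z t))) * norm g" using norm_blinfun[of "jH (N (z t))" g] by simp
    also have "\<dots> \<le> (norm jH * norm (N (z t))) * norm g" by (intro mult_right_mono norm_blinfun) simp
    also have "\<dots> \<le> norm jH * ((norm A + \<epsilon>) * norm g) * norm g"
      using Nz[OF t] by (simp add: mult_left_mono mult_right_mono)
    finally have "\<bar>s\<bar> * \<bar>jH (N (z t)) g\<bar> \<le> \<bar>s\<bar> * (norm jH * ((norm A + \<epsilon>) * norm g) * norm g)"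
      by (rule mult_left_mono) simp
    moreover have "\<bar>E' (z t) (s *\<^sub>R h)\<bar> = \<bar>s\<bar> * \<bar>jH (N (z t)) g\<bar>"
      using grad[OF zU[OF t]] unfolding g_def by (simp add: blinfun.scaleR_right abs_mult)
    ultimately show "norm (E' (z t) (s *\<^sub>R h)) \<le> norm jH * (norm A + \<epsilon>) * (norm g)\<^sup>2 * norm s"
      by (simp add: power2_eq_square algebra_simps)
  qed (use \<epsilon> in simp)
  ultimately have "norm (E (z 1) - E (z 0)) \<le> norm jH * (norm A + \<epsilon>) * (norm g)\<^sup>2 * norm (1 - 0 :: real)"
    by (intro differentiable_bound[OF convex_real_interval(5)]) auto
  then show ?thesis unfolding z_def g_def h_def by simp
qed

lemma sqrt_energy_bound:
  fixes c Q a m e :: real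
  assumes c: "c > 0" and Q: "Q \<ge> 0" and lin: "c * a \<le> m" and quad: "\<bar>e\<bar> \<le> Q * a\<^sup>2" and a: "a \<ge> 0"
  shows "c / sqrt (Q + 1) * sqrt \<bar>e\<bar> \<le> m"
proof -
  have "Q * a\<^sup>2 \<le> (Q + 1) * a\<^sup>2" by (simp add: mult_right_mono)
  then have "sqrt \<bar>e\<bar> \<le> sqrt ((Q + 1) * a\<^sup>2)" using quad by (intro real_sqrt_le_mono) linarith
  also have "\<dots> = sqrt (Q + 1) * a" using Q a by (simp add: real_sqrt_mult)
  finally have "c / sqrt (Q + 1) * sqrt \<bar>e\<bar> \<le> c / sqrt (Q + 1) * (sqrt (Q + 1) * a)"
    using c Q by (intro mult_left_mono) auto
  also have "\<dots> = c * a" using Q by simp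
  finally show ?thesis using lin by linarith
qed

lemma gradient_inequality_in_ball:
  fixes iX :: "'x::real_normed_vector \<Rightarrow>\<^sub>L 'g::real_normed_vector"
    and jH :: "'h::real_normed_vector \<Rightarrow>\<^sub>L ('g \<Rightarrow>\<^sub>L real)"
    and N :: "'x \<Rightarrow> 'h" and L :: "'x \<Rightarrow> ('g \<Rightarrow>\<^sub>L 'h)" and E :: "'x \<Rightarrow> real"
  assumes ball: "ball x0 r \<subseteq> U" "xc \<in> ball x0 r" "x \<in> ball x0 r"
    and near_ball: "\<And>z. z \<in> ball x0 r \<Longrightarrow> norm (L z - A) \<le> c / 2"
    and E_deriv: "\<And>z. z \<in> U \<Longrightarrow> (E has_derivative blinfun_apply (E' z)) (at z)"
    and grad: "\<And>z v. z \<in> U \<Longrightarrow> blinfun_apply (E' z) v = blinfun_apply (jH (N z)) (iX v)"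
    and N_deriv: "\<And>z. z \<in> U \<Longrightarrow> (N has_derivative N' z) (at z)"
    and N'_ext: "\<And>z v. z \<in> U \<Longrightarrow> N' z v = L z (iX v)"
    and N0: "N xc = 0"
    and c: "c > 0" and lower: "c * norm (iX (x - xc)) \<le> norm (A (iX (x - xc)))"
  shows "c / 2 / sqrt (norm jH * (norm A + c / 2) + 1) * sqrt \<bar>E x - E xc\<bar> \<le> norm (N x)"
proof -
  have seg_ball: "xc + t *\<^sub>R (x - xc) \<in> ball x0 r" if "t \<in> {0..1}" for t
    by (rule segment_point_in_ball[OF ball(2,3) that])
  then have seg: "\<And>t. t \<in> {0..1} \<Longrightarrow> xc + t *\<^sub>R (x - xc) \<in> U"
    and near: "\<And>t. t \<in> {0..1} \<Longrightarrow> norm (L (xc + t *\<^sub>R (x - xc)) - A) \<le> c / 2"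
    using ball(1) near_ball by blast+
  have "norm (N x - A (iX (x - xc))) \<le> c / 2 * norm (iX (x - xc))"
    by (rule linearization_error_on_segment[where xc = xc and x = x, OF seg near N_deriv N'_ext N0])
  then have "c / 2 * norm (iX (x - xc)) \<le> norm (N x)"
    using lower norm_triangle_ineq2[of "A (iX (x - xc))" "N x"] by (simp add: norm_minus_commute)
  moreover have "\<bar>E x - E xc\<bar> \<le> norm jH * (norm A + c / 2) * (norm (iX (x - xc)))\<^sup>2"
    by (rule energy_difference_on_segment[where xc = xc and x = x, OF seg near E_deriv grad N_deriv N'_ext N0])
  ultimately show ?thesis using c by (intro sqrt_energy_bound) auto
qed

lemma continuous_on_open_near:
  fixes f :: "'a::metric_space \<Rightarrow> 'b::metric_space"
  assumes "continuous_on U f" "open U" "x \<in> U" "\<epsilon> > 0"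
  obtains \<delta> where "\<delta> > 0" "ball x \<delta> \<subseteq> U" "\<And>z. z \<in> ball x \<delta> \<Longrightarrow> dist (f z) (f x) < \<epsilon>"
proof -
  have "isCont f x" using assms(1-3) by (simp add: continuous_on_eq_continuous_at)
  then obtain d where d: "d > 0" "\<forall>z. dist z x < d \<longrightarrow> dist (f z) (f x) < \<epsilon>"
    using assms(4) unfolding continuous_at_eps_delta by blast
  obtain d' where d': "d' > 0" "ball x d' \<subseteq> U" using assms(2,3) open_contains_ball by blast
  show ?thesis
  proof (rule that[of "min d d'"])
    show "min d d' > 0" "ball x (min d d') \<subseteq> U" using d(1) d' by auto
    show "dist (f z) (f x) < \<epsilon>" if "z \<in> ball x (min d d')" for z
    proof -
      have "dist z x < d" using that by (simp add: dist_commute)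
      then show ?thesis using d(2) by blast
    qed
  qed
qed

theorem theorem3:
  fixes iX :: "'x::banach \<Rightarrow>\<^sub>L 'g::banach"
    and jY :: "'y::banach \<Rightarrow>\<^sub>L 'h::banach"
    and jH :: "'h \<Rightarrow>\<^sub>L ('g \<Rightarrow>\<^sub>L real)"
    and U :: "'x set"
    and E :: "'x \<Rightarrow> real"
    and E1 :: "'x \<Rightarrow> ('x \<Rightarrow>\<^sub>L real)"
    and E2 :: "'x \<Rightarrow> ('x \<Rightarrow>\<^sub>L ('x \<Rightarrow>\<^sub>L real))"
    and M :: "'x \<Rightarrow> 'y"
    and M' :: "'x \<Rightarrow> ('x \<Rightarrow>\<^sub>L 'y)"
    and M1 :: "'x \<Rightarrow> ('g \<Rightarrow>\<^sub>L 'h)"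
    and X0 :: "'x set"
    and G0 :: "'g set"
    and x_inf :: 'x
  assumes emb_XG: "inj (blinfun_apply iX)"
    and emb_YH: "inj (blinfun_apply jY)"
    and emb_HG: "inj (blinfun_apply jH)"
    and emb_GX: "inj (\<lambda>\<phi>::'g \<Rightarrow>\<^sub>L real. \<phi> o\<^sub>L iX)"
    and U_open: "open U"
    and E_deriv: "\<And>x. x \<in> U \<Longrightarrow> (E has_derivative blinfun_apply (E1 x)) (at x)"
    and E1_deriv: "\<And>x. x \<in> U \<Longrightarrow> (E1 has_derivative blinfun_apply (E2 x)) (at x)"
    and E2_cont: "continuous_on U E2"
    and x_in: "x_inf \<in> U"
    and x_crit: "E1 x_inf = 0"
    and M_deriv: "\<And>x. x \<in> U \<Longrightarrow> (M has_derivative blinfun_apply (M' x)) (at x)"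
    and M'_cont: "continuous_on U M'"
    and M_grad: "\<And>x v. x \<in> U \<Longrightarrow>
        blinfun_apply (E1 x) v = blinfun_apply (jH (jY (M x))) (iX v)"
    and morse_bott: "morse_bott_at U E1 E2 x_inf"
    and M1_ext: "\<And>x v. x \<in> U \<Longrightarrow> blinfun_apply (M1 x) (iX v) = jY (M' x v)"
    and M1_cont: "continuous_on U M1"
    and X0_compl: "closed_complement {v. blinfun_apply (E2 x_inf) v = 0} X0"
    and G0_compl: "closed_complement {g. blinfun_apply (M1 x_inf) g = 0} G0"
    and X0_G0: "blinfun_apply iX ` X0 \<subseteq> G0"
    and ran_closed: "closed (range (blinfun_apply (M1 x_inf)))"
  shows "\<exists>Z \<sigma>. 0 < Z \<and> 0 < \<sigma> \<and> \<sigma> \<le> 1 \<and>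
    (\<forall>x\<in>U. norm (x - x_inf) < \<sigma> \<longrightarrow>
       norm (jY (M x)) \<ge> Z * sqrt \<bar>E x - E x_inf\<bar>)"
proof -
  define A where "A = M1 x_inf"
  obtain c where c: "c > 0" and lower: "\<And>g. g \<in> G0 \<Longrightarrow> c * norm g \<le> norm (A g)"
    using bounded_below_on_kernel_complement[OF G0_compl ran_closed] unfolding A_def by metis
  obtain \<delta> where \<delta>: "\<delta> > 0" "ball x_inf \<delta> \<subseteq> U"
    and near: "\<And>z. z \<in> ball x_inf \<delta> \<Longrightarrow> norm (M1 z - A) < c / 2"
    using continuous_on_open_near[OF M1_cont U_open x_in half_gt_zero[OF c]] unfolding A_def dist_norm by metis
  obtain \<sigma> where \<sigma>: "\<sigma> > 0" and crit_near: "\<And>x. norm (x - x_inf) < \<sigma> \<Longrightarrow>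
      \<exists>xc\<in>U. E1 xc = 0 \<and> E xc = E x_inf \<and> norm (xc - x_inf) < \<delta> / 2 \<and> x - xc \<in> X0"
    using morse_bott_nearby_critical_point[OF U_open x_in x_crit E_deriv morse_bott X0_compl, of "\<delta> / 2"] \<delta>(1)
    by (metis half_gt_zero)
  define Z where "Z = c / 2 / sqrt (norm jH * (norm A + c / 2) + 1)"
  have "Z * sqrt \<bar>E x - E x_inf\<bar> \<le> norm (jY (M x))" if x: "norm (x - x_inf) < min \<sigma> (\<delta> / 2)" for x
  proof -
    obtain xc where xc: "xc \<in> U" "E1 xc = 0" "E xc = E x_inf" "norm (xc - x_inf) < \<delta> / 2" "x - xc \<in> X0"
      using crit_near x by auto
    have "norm (x - x_inf) < \<delta> / 2" using x by simp
    then have "norm (xc - x_inf) < \<delta>" "norm (x - x_inf) < \<delta>"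
      using xc(4) norm_ge_zero[of "xc - x_inf"] norm_ge_zero[of "x - x_inf"] by linarith+
    then have "xc \<in> ball x_inf \<delta>" "x \<in> ball x_inf \<delta>" by (simp_all add: dist_norm norm_minus_commute)
    with \<delta>(2) have "Z * sqrt \<bar>E x - E xc\<bar> \<le> norm (jY (M x))" unfolding Z_def
    proof (rule gradient_inequality_in_ball[where L = M1 and A = A and E = E and E' = E1
          and N = "\<lambda>x. jY (M x)" and N' = "\<lambda>z v. jY (M' z v)"])
      show "norm (M1 z - A) \<le> c / 2" if "z \<in> ball x_inf \<delta>" for z using near[OF that] by simp
      show "((\<lambda>x. jY (M x)) has_derivative (\<lambda>v. jY (M' z v))) (at z)" if "z \<in> U" for z
        using bounded_linear.has_derivative[OF blinfun.bounded_linear_right M_deriv[OF that]] .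
      show "jY (M xc) = 0" by (rule gradient_zero_at_critical_point[OF emb_HG emb_GX M_grad[OF xc(1)] xc(2)])
      show "c * norm (iX (x - xc)) \<le> norm (A (iX (x - xc)))" using X0_G0 xc(5) lower by blast
    qed (use E_deriv M_grad M1_ext c in auto)
    then show ?thesis unfolding xc(3) .
  qed
  moreover have "Z > 0" unfolding Z_def using c by (simp add: add_nonneg_pos)
  ultimately show ?thesis using \<sigma> \<delta>(1)
    by (intro exI[of _ Z] exI[of _ "min 1 (min \<sigma> (\<delta> / 2))"]) auto
qed

end
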